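(* Let $2\le m\le n$, let $R,S$ be complex $m\times n$ matrices and let $|\psi\rangle=|0\rangle\otimes\sum_{j,k}R_{jk}|j\rangle|k\rangle+|1\rangle\otimes\sum_{j,k}S_{jk}|j\rangle|k\rangle\in\mathbb{C}^2\otimes\mathbb{C}^m\otimes\mathbb{C}^n$, with associated matrix pencil $\mathcal{P}=\mu R+\lambda S$. Suppose that there are invertible matrices $B\in GL(m,\mathbb{C})$, $C\in GL(n,\mathbb{C})$ and positive integers $\epsilon,\nu$ such that $B\mathcal{P}C^T=\mathrm{blockdiag}\{L_\epsilon,L_\nu^T,\tilde{\mathcal{P}}\}$ for some (possibly empty) matrix pencil $\tilde{\mathcal{P}}$ of size $(m-\epsilon-\nu-1)\times(n-\epsilon-\nu-1)$. Then $|\psi\rangle$ (and hence its whole SLOCC class $G|\psi\rangle$) lies in the null-cone.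
   Context: $G=SL(2,\mathbb{C})\times SL(m,\mathbb{C})\times SL(n,\mathbb{C})$ acts by $A\otimes B\otimes C$; the null-cone is the set of vectors $|\phi\rangle$ with $0\in\overline{G|\phi\rangle}$ (standard topology). Here $\lambda,\mu$ are formal variables, and $L_\epsilon$ is the $\epsilon\times(\epsilon+1)$ pencil with entries $\lambda$ at positions $(i,i)$ and $\mu$ at positions $(i,i+1)$, $i=1,\dots,\epsilon$, all other entries zero; $L_\nu^T$ is the transpose of $L_\nu$ (size $(\nu+1)\times\nu$). *)

theory Defs
  imports "Jordan_Normal_Form.Determinant"
begin

text \<open>A tensor in C^2 (x) C^m (x) C^n is a function psi i j k (i<2, j<m, k<n).
  The tensor |0>(x)R + |1>(x)S associated with two m x n matrices R, S.\<close>
definition tensor_of :: "complex mat \<Rightarrow> complex mat \<Rightarrow> nat \<Rightarrow> nat \<Rightarrow> nat \<Rightarrow> complex" where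
  "tensor_of R S i j k = (if i = 0 then R $$ (j, k) else S $$ (j, k))"

definition act :: "nat \<Rightarrow> nat \<Rightarrow> complex mat \<Rightarrow> complex mat \<Rightarrow> complex mat
    \<Rightarrow> (nat \<Rightarrow> nat \<Rightarrow> nat \<Rightarrow> complex) \<Rightarrow> nat \<Rightarrow> nat \<Rightarrow> nat \<Rightarrow> complex" where
  "act m n A B C psi i j k =
     (\<Sum>i'<2. \<Sum>j'<m. \<Sum>k'<n. A $$ (i, i') * B $$ (j, j') * C $$ (k, k') * psi i' j' k')"

definition in_G :: "nat \<Rightarrow> nat \<Rightarrow> complex mat \<Rightarrow> complex mat \<Rightarrow> complex mat \<Rightarrow> bool" where
  "in_G m n A B C \<longleftrightarrow>
     A \<in> carrier_mat 2 2 \<and> det A = 1 \<and>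
     B \<in> carrier_mat m m \<and> det B = 1 \<and>
     C \<in> carrier_mat n n \<and> det C = 1"

text \<open>Null-cone: 0 lies in the closure of the G-orbit (standard topology on the
  finite-dimensional space C^(2mn); written with the max-norm of coordinates).\<close>
definition null_cone :: "nat \<Rightarrow> nat \<Rightarrow> (nat \<Rightarrow> nat \<Rightarrow> nat \<Rightarrow> complex) \<Rightarrow> bool" where
  "null_cone m n psi \<longleftrightarrow>
     (\<forall>e>0. \<exists>A B C. in_G m n A B C \<and>
        (\<forall>i<2. \<forall>j<m. \<forall>k<n. cmod (act m n A B C psi i j k) < e))"

text \<open>A matrix pencil mu X + lambda Y is represented by the pair (X, Y)
  (coefficient of mu, coefficient of lambda).\<close>

definition L_mu :: "nat \<Rightarrow> complex mat" where
  "L_mu e = mat e (e + 1) (\<lambda>(i, j). if j = i + 1 then 1 else 0)"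
definition L_lam :: "nat \<Rightarrow> complex mat" where
  "L_lam e = mat e (e + 1) (\<lambda>(i, j). if j = i then 1 else 0)"

definition blockdiag3 :: "complex mat \<Rightarrow> complex mat \<Rightarrow> complex mat \<Rightarrow> complex mat" where
  "blockdiag3 X Y Z =
     four_block_mat X (0\<^sub>m (dim_row X) (dim_col Y + dim_col Z))
       (0\<^sub>m (dim_row Y + dim_row Z) (dim_col X))
       (four_block_mat Y (0\<^sub>m (dim_row Y) (dim_col Z)) (0\<^sub>m (dim_row Z) (dim_col Y)) Z)"

end

theory Submission
  imports Defs
begin

text \<open>After the change of basis by \<open>(B, C)\<close>, every nonzero entry of both slices lies in one
  of the three diagonal blocks. Choose real weights \<open>\<beta>\<close> on rows and \<open>\<gamma>\<close> on columns with
  \<open>\<Sum>\<beta> = \<Sum>\<gamma> = 0\<close> and \<open>\<beta>\<^sub>j + \<gamma>\<^sub>k = 1\<close> on the diagonal blocks. Then the one-parameter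
  subgroup \<open>s \<mapsto> diag(s\<^sup>\<beta>) \<otimes> diag(s\<^sup>\<gamma>)\<close> of \<open>SL(m) \<times> SL(n)\<close> multiplies the transformed tensor
  by \<open>s\<close>, which tends to 0 as \<open>s \<rightarrow> 0\<^sup>+\<close>. Such weights exist because the size vectors \<open>(\<epsilon>, \<epsilon>+1)\<close> and
  \<open>(\<nu>+1, \<nu>)\<close> of the two Kronecker blocks are linearly independent.\<close>

lemma act_one_tensor_of:
  assumes "B \<in> carrier_mat m m" "C \<in> carrier_mat n n"
    and "R \<in> carrier_mat m n" "S \<in> carrier_mat m n"
    and "i < 2" "j < m" "k < n"
  shows "act m n (1\<^sub>m 2) B C (tensor_of R S) i j k
    = (B * (if i = 0 then R else S) * transpose_mat C) $$ (j, k)"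
proof -
  define X where "X = (if i = 0 then R else S)"
  have X: "X \<in> carrier_mat m n"
    using assms unfolding X_def by auto
  have "act m n (1\<^sub>m 2) B C (tensor_of R S) i j k
      = (\<Sum>j'<m. \<Sum>k'<n. B $$ (j, j') * C $$ (k, k') * X $$ (j', k'))"
    using \<open>i < 2\<close> unfolding act_def tensor_of_def X_def numeral_2_eq_2
    by (cases i) auto
  also have "\<dots> = (B * X * transpose_mat C) $$ (j, k)"
    using assms X
    by (simp add: scalar_prod_def sum_distrib_left lessThan_atLeast0 ac_simps)
  finally show ?thesis
    unfolding X_def .
qed

lemma transpose_mat_diag [simp]: "transpose_mat (mat_diag n f) = mat_diag n f"
  by (auto simp: mat_diag_def)

lemma det_mat_diag: "det (mat_diag n f) = (\<Prod>i<n. f i)"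
proof -
  have "upper_triangular (mat_diag n f)"
    by (auto simp: upper_triangular_def mat_diag_def)
  then have "det (mat_diag n f) = prod_list (diag_mat (mat_diag n f))"
    by (intro det_upper_triangular[of _ n]) auto
  then show ?thesis
    by (simp add: prod_list_diag_prod mat_diag_def lessThan_atLeast0)
qed

lemma mat_diag_mult_mult_mat_diag_index:
  fixes Y :: "'a :: comm_semiring_0 mat"
  assumes "Y \<in> carrier_mat m n" "j < m" "k < n"
  shows "(mat_diag m f * Y * mat_diag n g) $$ (j, k) = f j * g k * Y $$ (j, k)"
  using assms by (simp add: mat_diag_mult_left[OF assms(1)] mat_diag_mult_right[of _ m] ac_simps)

lemma act_mat_diag_mult_tensor_of:
  assumes "B \<in> carrier_mat m m" "C \<in> carrier_mat n n"
    and "R \<in> carrier_mat m n" "S \<in> carrier_mat m n"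
    and "i < 2" "j < m" "k < n"
  shows "act m n (1\<^sub>m 2) (mat_diag m f * B) (mat_diag n g * C) (tensor_of R S) i j k
    = f j * g k * (B * (if i = 0 then R else S) * transpose_mat C) $$ (j, k)"
proof -
  define X where "X = (if i = 0 then R else S)"
  have X: "X \<in> carrier_mat m n"
    using assms unfolding X_def by auto
  let ?D = "mat_diag m f" and ?E = "mat_diag n g"
  have "?D * B * X * transpose_mat (?E * C) = ?D * B * X * (transpose_mat C * ?E)"
    using assms(2) by (simp add: transpose_mult[of _ n n])
  also have "\<dots> = ?D * B * X * transpose_mat C * ?E"
    using assms(1,2) X
    by (auto intro!: assoc_mult_mat[symmetric, of _ m n _ n _ n] mult_carrier_mat)
  also have "\<dots> = ?D * (B * X * transpose_mat C) * ?E"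
    using assms(1,2) X
    by (simp add: assoc_mult_mat[of ?D m m B m X n] assoc_mult_mat[of ?D m m "B * X" n _ n])
  finally have product: "?D * B * X * transpose_mat (?E * C) = ?D * (B * X * transpose_mat C) * ?E" .
  have "act m n (1\<^sub>m 2) (?D * B) (?E * C) (tensor_of R S) i j k
      = (?D * B * X * transpose_mat (?E * C)) $$ (j, k)"
    using assms unfolding X_def
    by (intro act_one_tensor_of mult_carrier_mat[of _ m m] mult_carrier_mat[of _ n n]) auto
  also have "\<dots> = f j * g k * (B * X * transpose_mat C) $$ (j, k)"
    unfolding product using assms(1,2,6,7) X
    by (intro mat_diag_mult_mult_mat_diag_index) auto
  finally show ?thesis
    unfolding X_def .
qed

lemma det_normalized_mat_diag_mult:
  fixes B :: "'a :: field mat"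
  assumes "B \<in> carrier_mat m m" "det B \<noteq> 0" "0 < m" "(\<Prod>j<m. f j) = 1"
  shows "det (mat_diag m (\<lambda>j. (if j = 0 then inverse (det B) else 1) * f j) * B) = 1"
  using assms by (simp add: det_mult[of _ m] det_mat_diag prod.distrib prod.delta)

lemma prod_powr_eq_one:
  fixes w :: "nat \<Rightarrow> real"
  assumes "0 < s" "(\<Sum>j<p. w j) = 0"
  shows "(\<Prod>j<p. complex_of_real (s powr w j)) = 1"
proof -
  have "(\<Prod>j<p. s powr w j) = 1"
    using powr_sum[of s w "{..<p}"] assms by simp
  then show ?thesis
    by (metis of_real_1 of_real_prod)
qed

lemma tendsto_powr_mult_zero:
  fixes a :: real and z :: complex
  assumes "z \<noteq> 0 \<Longrightarrow> 0 < a"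
  shows "((\<lambda>s. complex_of_real (s powr a) * z) \<longlongrightarrow> 0) (at_right 0)"
proof (cases "z = 0")
  case False
  have "((\<lambda>s. s powr a) \<longlongrightarrow> 0) (at_right 0)"
    using assms False by (intro tendsto_zero_powrI tendsto_ident_at eventually_at_rightI[of 0 1]) auto
  then show ?thesis
    by (intro tendsto_mult_left_zero) (metis of_real_0 tendsto_of_real)
qed simp

lemma null_cone_if_tendsto_zero:
  assumes "F \<noteq> bot" and "\<forall>\<^sub>F s in F. in_G m n (A s) (B s) (C s)"
    and "\<And>i j k. i < 2 \<Longrightarrow> j < m \<Longrightarrow> k < n \<Longrightarrow>
      ((\<lambda>s. act m n (A s) (B s) (C s) psi i j k) \<longlongrightarrow> 0) F"
  shows "null_cone m n psi"
  unfolding null_cone_def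
proof (intro allI impI)
  fix e :: real
  assume "0 < e"
  let ?entry = "\<lambda>s i j k. act m n (A s) (B s) (C s) psi i j k"
  have "\<forall>\<^sub>F s in F. cmod (?entry s i j k) < e" if "i < 2" "j < m" "k < n" for i j k
    using order_tendstoD(2)[OF tendsto_norm_zero[OF assms(3)[OF that]]] \<open>0 < e\<close> by simp
  then have "\<forall>\<^sub>F s in F. \<forall>ijk \<in> {..<2} \<times> {..<m} \<times> {..<n}.
      cmod (?entry s (fst ijk) (fst (snd ijk)) (snd (snd ijk))) < e"
    by (intro eventually_ball_finite) auto
  with assms(2) have "\<forall>\<^sub>F s in F. in_G m n (A s) (B s) (C s) \<and>
      (\<forall>i<2. \<forall>j<m. \<forall>k<n. cmod (?entry s i j k) < e)"
    by eventually_elim auto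
  then show "\<exists>A B C. in_G m n A B C \<and>
      (\<forall>i<2. \<forall>j<m. \<forall>k<n. cmod (act m n A B C psi i j k) < e)"
    using eventually_happens'[OF assms(1)] by blast
qed

lemma null_cone_by_one_parameter_subgroup:
  fixes b c :: "nat \<Rightarrow> real"
  assumes "0 < m" "0 < n"
    and "R \<in> carrier_mat m n" "S \<in> carrier_mat m n"
    and "B \<in> carrier_mat m m" "det B \<noteq> 0" "C \<in> carrier_mat n n" "det C \<noteq> 0"
    and "(\<Sum>j<m. b j) = 0" "(\<Sum>k<n. c k) = 0"
    and weights_pos: "\<And>X j k. X \<in> {R, S} \<Longrightarrow> j < m \<Longrightarrow> k < n \<Longrightarrow>
      (B * X * transpose_mat C) $$ (j, k) \<noteq> 0 \<Longrightarrow> 0 < b j + c k"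
  shows "null_cone m n (tensor_of R S)"
proof -
  define u where "u M j = (if j = 0 then inverse (det M) else 1)" for M :: "complex mat" and j :: nat
  define Y where "Y i = B * (if i = 0 then R else S) * transpose_mat C" for i :: nat
  define D where "D s = mat_diag m (\<lambda>j. u B j * complex_of_real (s powr b j))" for s
  define E where "E s = mat_diag n (\<lambda>k. u C k * complex_of_real (s powr c k))" for s
  have positive: "\<forall>\<^sub>F s in at_right 0. 0 < (s :: real)"
    by (rule eventually_at_rightI[of 0 1]) auto
  show ?thesis
  proof (rule null_cone_if_tendsto_zero[OF trivial_limit_at_right_real])
    show "\<forall>\<^sub>F s in at_right 0. in_G m n (1\<^sub>m 2) (D s * B) (E s * C)"
      using positive
    proof eventually_elim
      case (elim s)
      then show ?case
        using assms unfolding in_G_def D_def E_def u_def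
        by (auto simp: det_normalized_mat_diag_mult prod_powr_eq_one
            intro: mult_carrier_mat[of _ m m] mult_carrier_mat[of _ n n])
    qed
  next
    fix i j k :: nat
    assume ijk: "i < 2" "j < m" "k < n"
    let ?z = "u B j * u C k * Y i $$ (j, k)"
    have "Y i $$ (j, k) \<noteq> 0 \<Longrightarrow> 0 < b j + c k"
      using weights_pos ijk unfolding Y_def by (cases "i = 0") auto
    then have "((\<lambda>s. complex_of_real (s powr (b j + c k)) * ?z) \<longlongrightarrow> 0) (at_right 0)"
      by (intro tendsto_powr_mult_zero) auto
    moreover have "\<forall>\<^sub>F s in at_right 0. complex_of_real (s powr (b j + c k)) * ?z
        = act m n (1\<^sub>m 2) (D s * B) (E s * C) (tensor_of R S) i j k"
      using positive
      by eventually_elim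
        (use assms(3-5,7) ijk in \<open>simp add: D_def E_def Y_def act_mat_diag_mult_tensor_of powr_add\<close>)
    ultimately show "((\<lambda>s. act m n (1\<^sub>m 2) (D s * B) (E s * C) (tensor_of R S) i j k) \<longlongrightarrow> 0)
        (at_right 0)"
      by (rule Lim_transform_eventually)
  qed
qed

definition in_diagonal_blocks :: "nat \<Rightarrow> nat \<Rightarrow> nat \<Rightarrow> nat \<Rightarrow> nat \<Rightarrow> nat \<Rightarrow> bool" where
  "in_diagonal_blocks a1 b1 a2 b2 j k \<longleftrightarrow>
     (j < a1 \<and> k < b1) \<or> (a1 \<le> j \<and> j < a1 + a2 \<and> b1 \<le> k \<and> k < b1 + b2) \<or>
     (a1 + a2 \<le> j \<and> b1 + b2 \<le> k)"

lemma blockdiag3_nonzero_in_diagonal_blocks: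
  assumes "X \<in> carrier_mat a1 b1" "Y \<in> carrier_mat a2 b2" "Z \<in> carrier_mat a3 b3"
    and "j < a1 + a2 + a3" "k < b1 + b2 + b3" "blockdiag3 X Y Z $$ (j, k) \<noteq> 0"
  shows "in_diagonal_blocks a1 b1 a2 b2 j k"
  using assms unfolding blockdiag3_def in_diagonal_blocks_def by (auto split: if_splits)

lemma sum_lessThan_steps3:
  fixes x y z :: "'a :: semiring_1"
  shows "(\<Sum>j<p + q + r. if j < p then x else if j < p + q then y else z)
    = of_nat p * x + of_nat q * y + of_nat r * z"
proof (induction r)
  case 0
  have "(\<Sum>j<p + q. if j < p then x else if j < p + q then y else z)
      = (\<Sum>j<p + q. if j < p then x else y)"
    by (rule sum.cong) auto
  also have "\<dots> = of_nat p * x + of_nat q * y"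
    by (induction q) (auto simp: algebra_simps)
  finally show ?case
    by simp
qed (auto simp: algebra_simps)

lemma diagonal_block_weights:
  fixes a1 b1 a2 b2 a3 b3 :: nat
  assumes "a1 * b2 \<noteq> a2 * b1"
  obtains \<beta> \<gamma> :: "nat \<Rightarrow> real"
  where "(\<Sum>j<a1 + a2 + a3. \<beta> j) = 0" "(\<Sum>k<b1 + b2 + b3. \<gamma> k) = 0"
    and "\<And>j k. in_diagonal_blocks a1 b1 a2 b2 j k \<Longrightarrow> \<beta> j + \<gamma> k = 1"
proof -
  text \<open>Block \<open>i\<close> gets column weight \<open>\<gamma>\<^sub>i\<close> (with \<open>\<gamma>\<^sub>3 = 0\<close>) and row weight \<open>1 - \<gamma>\<^sub>i\<close>; the two sum
    conditions then form a linear system in \<open>\<gamma>\<^sub>1, \<gamma>\<^sub>2\<close> with determinant \<open>\<Delta>\<close>.\<close>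
  define M where "M = real (a1 + a2 + a3)"
  define \<Delta> where "\<Delta> = real a1 * real b2 - real a2 * real b1"
  have "\<Delta> \<noteq> 0"
    using assms unfolding \<Delta>_def by (metis eq_iff_diff_eq_0 of_nat_eq_iff of_nat_mult)
  define \<gamma>1 where "\<gamma>1 = M * b2 / \<Delta>"
  define \<gamma>2 where "\<gamma>2 = - M * b1 / \<Delta>"
  have rows: "a1 * \<gamma>1 + a2 * \<gamma>2 = M"
    using \<open>\<Delta> \<noteq> 0\<close> unfolding \<gamma>1_def \<gamma>2_def \<Delta>_def
    by (simp add: divide_simps; simp add: algebra_simps)
  have cols: "b1 * \<gamma>1 + b2 * \<gamma>2 = 0"
    using \<open>\<Delta> \<noteq> 0\<close> unfolding \<gamma>1_def \<gamma>2_def \<Delta>_def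
    by (simp add: divide_simps; simp add: algebra_simps)
  define \<beta> where "\<beta> j = (if j < a1 then 1 - \<gamma>1 else if j < a1 + a2 then 1 - \<gamma>2 else 1)" for j
  define \<gamma> where "\<gamma> k = (if k < b1 then \<gamma>1 else if k < b1 + b2 then \<gamma>2 else 0)" for k
  show thesis
  proof
    show "(\<Sum>j<a1 + a2 + a3. \<beta> j) = 0"
      using rows unfolding \<beta>_def sum_lessThan_steps3 M_def by (simp add: algebra_simps)
    show "(\<Sum>k<b1 + b2 + b3. \<gamma> k) = 0"
      using cols unfolding \<gamma>_def sum_lessThan_steps3 by simp
    show "\<beta> j + \<gamma> k = 1" if "in_diagonal_blocks a1 b1 a2 b2 j k" for j k
      using that unfolding in_diagonal_blocks_def \<beta>_def \<gamma>_def by auto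
  qed
qed

lemma dim_L_mu [simp]: "dim_row (L_mu e) = e" "dim_col (L_mu e) = e + 1"
  by (simp_all add: L_mu_def)

lemma dim_L_lam [simp]: "dim_row (L_lam e) = e" "dim_col (L_lam e) = e + 1"
  by (simp_all add: L_lam_def)

theorem mainTheorem8:
  fixes m n eps nu :: nat and R S B C Pmu Plam :: "complex mat"
  assumes "2 \<le> m" and "m \<le> n"
    and "R \<in> carrier_mat m n" and "S \<in> carrier_mat m n"
    and "B \<in> carrier_mat m m" and "det B \<noteq> 0"
    and "C \<in> carrier_mat n n" and "det C \<noteq> 0"
    and "0 < eps" and "0 < nu"
    and "Pmu \<in> carrier_mat (m - eps - nu - 1) (n - eps - nu - 1)"
    and "Plam \<in> carrier_mat (m - eps - nu - 1) (n - eps - nu - 1)"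
    and "B * R * transpose_mat C = blockdiag3 (L_mu eps) (transpose_mat (L_mu nu)) Pmu"
    and "B * S * transpose_mat C = blockdiag3 (L_lam eps) (transpose_mat (L_lam nu)) Plam"
  shows "null_cone m n (tensor_of R S)"
proof -
  let ?p = "m - eps - nu - 1" and ?q = "n - eps - nu - 1"
  have rows: "eps + (nu + 1) + ?p = m" and cols: "(eps + 1) + nu + ?q = n"
    using arg_cong[OF assms(13), of dim_row] arg_cong[OF assms(13), of dim_col] assms(3,5,7,11)
    by (simp_all add: blockdiag3_def)
  obtain \<beta> \<gamma> :: "nat \<Rightarrow> real"
    where row_sum: "(\<Sum>j<eps + (nu + 1) + ?p. \<beta> j) = 0"
      and col_sum: "(\<Sum>k<(eps + 1) + nu + ?q. \<gamma> k) = 0"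
      and weights: "\<And>j k. in_diagonal_blocks eps (eps + 1) (nu + 1) nu j k \<Longrightarrow> \<beta> j + \<gamma> k = 1"
    by (rule diagonal_block_weights[of eps nu "nu + 1" "eps + 1"]) (auto simp: algebra_simps)
  have "(\<Sum>j<m. \<beta> j) = 0" "(\<Sum>k<n. \<gamma> k) = 0"
    using row_sum col_sum unfolding rows cols .
  moreover have "0 < \<beta> j + \<gamma> k"
    if "X \<in> {R, S}" "j < m" "k < n" "(B * X * transpose_mat C) $$ (j, k) \<noteq> 0" for X j k
  proof -
    have "in_diagonal_blocks eps (eps + 1) (nu + 1) nu j k"
    proof (cases "X = R")
      case True
      then show ?thesis
        using that assms(11,13) rows cols
        by (intro blockdiag3_nonzero_in_diagonal_blocks[of "L_mu eps" _ _ "transpose_mat (L_mu nu)"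
              _ _ Pmu ?p ?q]) (auto intro: carrier_matI)
    next
      case False
      then show ?thesis
        using that assms(12,14) rows cols
        by (intro blockdiag3_nonzero_in_diagonal_blocks[of "L_lam eps" _ _ "transpose_mat (L_lam nu)"
              _ _ Plam ?p ?q]) (auto intro: carrier_matI)
    qed
    then show ?thesis
      using weights by simp
  qed
  ultimately show ?thesis
    using assms(1-8) by (intro null_cone_by_one_parameter_subgroup[where B = B and C = C]) auto
qed

end
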